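(* Let $\tau=\overline{\mathrm{K\ddot ah}(X)}\subset L_{\mathrm{ext}}^\vee\otimes\mathbb{R}$ and $\beta=(0,\dots,0,-1/2,\dots,-1/2)$. Let $\mathcal{I}'\subset\mathbb{C}[\alpha_{i,j}:(i,j)\in J]$ be the ideal generated by (a') $I_{\ell_{\mathrm{ext}}(\mathcal{P})}(\alpha)$ for all primitive collections $\mathcal{P}$ of $\Sigma$, and (b') $\sum_{(i,j)\in J}\langle\bar m,\nu_{i,j}\rangle\alpha_{i,j}-\langle\bar m,\beta\rangle$ for all $\bar m\in M\times\mathbb{Z}^r$. Then $\mathcal{I}'\subset\mathrm{Ind}(\tau,\beta)$, and $\mathcal{I}'$ and $\mathrm{Ind}(\tau,\beta)$ have the same zero locus in $\mathbb{C}^J$.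
   Context: $N\cong\mathbb{Z}^n$, $M$ dual. $X$ smooth projective toric with fan $\Sigma$ and nef-partition $\Sigma(1)=I_1\sqcup\cdots\sqcup I_r$ (each $E_i=\sum_{\rho\in I_i}D_\rho$ nef), $I_i=\{\rho_{i,1},\dots,\rho_{i,n_i}\}$, $J=\{(i,j):1\le i\le r,0\le j\le n_i\}$, $\nu_{i,j}=(\rho_{i,j},e_i)$ ($j\ge1$), $\nu_{i,0}=(0,e_i)$ in $N\times\mathbb{Z}^r$. $A_{\mathrm{ext}}:\mathbb{Z}^J\to N\times\mathbb{Z}^r$, $e_{i,j}\mapsto\nu_{i,j}$, $L_{\mathrm{ext}}=\ker A_{\mathrm{ext}}$, isomorphic via forgetting $(i,0)$-coordinates to $L=\ker(e_{i,j}\mapsto\rho_{i,j})\cong H_2(X,\mathbb{Z})$, so $H^2(X,\mathbb{R})\cong L_{\mathrm{ext}}^\vee\otimes\mathbb{R}$; $\overline{\mathrm{K\ddot ah}(X)}$ is the closed Kähler (= nef) cone in it. For $\ell\in L_{\mathrm{ext}}$ with $\ell=\ell^+-\ell^-$ ($\ell^\pm\ge0$, disjoint supports), $I_\ell(\alpha):=x^{-\alpha}x^{\ell^+}\partial_x^{\ell^+}x^\alpha=\prod_{(i,j)\in J}\prod_{k=0}^{\ell^+_{i,j}-1}(\alpha_{i,j}-k)\in\mathbb{C}[\alpha]$. For a cone $\tau\subset L_{\mathrm{ext}}^\vee\otimes\mathbb{R}$ and $\beta\in\mathbb{C}^{n+r}$, the indicial ideal $\mathrm{Ind}(\tau,\beta)\subset\mathbb{C}[\alpha_{i,j}:(i,j)\in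 J]$ is generated by $I_\ell(\alpha)$ for $0\ne\ell\in\tau^\vee\cap L_{\mathrm{ext}}$ and by $\sum_{(i,j)\in J}\langle\bar m,\nu_{i,j}\rangle\alpha_{i,j}-\langle\bar m,\beta\rangle$ for $\bar m\in M\times\mathbb{Z}^r$. A primitive collection is $\mathcal{P}\subset\Sigma(1)$ not spanning a cone while every proper subset does; $\ell_{\mathrm{ext}}(\mathcal{P})\in L_{\mathrm{ext}}$ is the image of its primitive relation $\ell(\mathcal{P})\in L$ (coefficients of $\sum_{\mathcal{P}}\rho_{i,j}-\sum_{\sigma(1)}c_{i,j}\rho_{i,j}=0$, where $\sigma$ is the cone containing $\sum_\mathcal{P}\rho_{i,j}$ in its relative interior and $c_{i,j}\in\mathbb{Z}_{>0}$). *)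

theory Defs
  imports "HOL-Analysis.Analysis" "HOL-Library.Poly_Mapping"
begin

(* Indices: i ranges over {0..<r} (0-based instead of 1..r), j over {0..nn i}.
   The ray rho_{i,j} (1 <= j <= nn i) is the primitive vector v i j in N = int^'n. *)

definition rays :: "nat \<Rightarrow> (nat \<Rightarrow> nat) \<Rightarrow> (nat \<times> nat) set" where
  "rays r nn = {(i,j). i < r \<and> 1 \<le> j \<and> j \<le> nn i}"

definition Jset :: "nat \<Rightarrow> (nat \<Rightarrow> nat) \<Rightarrow> (nat \<times> nat) set" where
  "Jset r nn = {(i,j). i < r \<and> j \<le> nn i}"

definition rv :: "(nat \<Rightarrow> nat \<Rightarrow> int^'n) \<Rightarrow> nat \<times> nat \<Rightarrow> real^'n" where
  "rv v \<rho> = (\<chi> k. real_of_int (v (fst \<rho>) (snd \<rho>) $ k))"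

definition idot :: "int^'n \<Rightarrow> int^'n \<Rightarrow> int" where
  "idot m u = (\<Sum>k\<in>UNIV. m $ k * u $ k)"

definition coneS :: "(nat \<Rightarrow> nat \<Rightarrow> int^'n) \<Rightarrow> (nat \<times> nat) set \<Rightarrow> (real^'n) set" where
  "coneS v \<sigma> = {x. \<exists>c. (\<forall>\<rho>\<in>\<sigma>. 0 \<le> c \<rho>) \<and> x = (\<Sum>\<rho>\<in>\<sigma>. c \<rho> *\<^sub>R rv v \<rho>)}"

definition unimodular_cone :: "(nat \<Rightarrow> nat \<Rightarrow> int^'n) \<Rightarrow> (nat \<times> nat) set \<Rightarrow> bool" where
  "unimodular_cone v \<sigma> \<longleftrightarrow> inj_on (\<lambda>\<rho>. v (fst \<rho>) (snd \<rho>)) \<sigma> \<and>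
     (\<exists>B :: int^'n^'n. \<bar>det B\<bar> = 1 \<and> (\<forall>\<rho>\<in>\<sigma>. \<exists>k. B $ k = v (fst \<rho>) (snd \<rho>)))"

text \<open>A smooth complete fan Sigma, given by the sets of rays spanning its cones,
  whose set of rays Sigma(1) is exactly the family v i j, (i,j) in rays r nn.\<close>
definition smooth_complete_fan ::
  "nat \<Rightarrow> (nat \<Rightarrow> nat) \<Rightarrow> (nat \<Rightarrow> nat \<Rightarrow> int^'n) \<Rightarrow> (nat \<times> nat) set set \<Rightarrow> bool" where
  "smooth_complete_fan r nn v S \<longleftrightarrow>
     (\<forall>\<sigma>\<in>S. \<sigma> \<subseteq> rays r nn) \<and>
     (\<forall>\<sigma>\<in>S. \<forall>\<tau>. \<tau> \<subseteq> \<sigma> \<longrightarrow> \<tau> \<in> S) \<and>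
     (\<forall>\<rho>\<in>rays r nn. {\<rho>} \<in> S) \<and>
     (\<forall>\<sigma>\<in>S. unimodular_cone v \<sigma>) \<and>
     (\<forall>\<sigma>\<in>S. \<forall>\<sigma>'\<in>S. coneS v \<sigma> \<inter> coneS v \<sigma>' = coneS v (\<sigma> \<inter> \<sigma>')) \<and>
     (\<Union>\<sigma>\<in>S. coneS v \<sigma>) = UNIV"

definition max_cone :: "(nat \<times> nat) set set \<Rightarrow> (nat \<times> nat) set \<Rightarrow> bool" where
  "max_cone S \<sigma> \<longleftrightarrow> \<sigma> \<in> S \<and> (\<forall>\<sigma>'\<in>S. \<sigma> \<subseteq> \<sigma>' \<longrightarrow> \<sigma>' = \<sigma>)"

text \<open>The real torus-invariant divisor sum a_rho D_rho is nef (support function convex).\<close>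
definition nef_div ::
  "nat \<Rightarrow> (nat \<Rightarrow> nat) \<Rightarrow> (nat \<Rightarrow> nat \<Rightarrow> int^'n) \<Rightarrow> (nat \<times> nat) set set \<Rightarrow> (nat \<times> nat \<Rightarrow> real) \<Rightarrow> bool" where
  "nef_div r nn v S a \<longleftrightarrow> (\<forall>\<sigma>. max_cone S \<sigma> \<longrightarrow>
     (\<exists>m::real^'n. (\<forall>\<rho>\<in>\<sigma>. m \<bullet> rv v \<rho> = - a \<rho>) \<and>
                   (\<forall>\<rho>\<in>rays r nn. m \<bullet> rv v \<rho> \<ge> - a \<rho>)))"

text \<open>The divisor is ample (support function strictly convex).\<close>
definition ample_div ::
  "nat \<Rightarrow> (nat \<Rightarrow> nat) \<Rightarrow> (nat \<Rightarrow> nat \<Rightarrow> int^'n) \<Rightarrow> (nat \<times> nat) set set \<Rightarrow> (nat \<times> nat \<Rightarrow> real) \<Rightarrow> bool" where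
  "ample_div r nn v S a \<longleftrightarrow> (\<forall>\<sigma>. max_cone S \<sigma> \<longrightarrow>
     (\<exists>m::real^'n. (\<forall>\<rho>\<in>\<sigma>. m \<bullet> rv v \<rho> = - a \<rho>) \<and>
                   (\<forall>\<rho>\<in>rays r nn - \<sigma>. m \<bullet> rv v \<rho> > - a \<rho>)))"

definition projective_fan ::
  "nat \<Rightarrow> (nat \<Rightarrow> nat) \<Rightarrow> (nat \<Rightarrow> nat \<Rightarrow> int^'n) \<Rightarrow> (nat \<times> nat) set set \<Rightarrow> bool" where
  "projective_fan r nn v S \<longleftrightarrow> (\<exists>a :: nat \<times> nat \<Rightarrow> int. ample_div r nn v S (\<lambda>\<rho>. real_of_int (a \<rho>)))"

text \<open>Nef-partition: each part I_i is nonempty and E_i = sum over I_i of D_rho is nef.\<close>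
definition nef_partition ::
  "nat \<Rightarrow> (nat \<Rightarrow> nat) \<Rightarrow> (nat \<Rightarrow> nat \<Rightarrow> int^'n) \<Rightarrow> (nat \<times> nat) set set \<Rightarrow> bool" where
  "nef_partition r nn v S \<longleftrightarrow> (\<forall>i<r. 1 \<le> nn i \<and>
      nef_div r nn v S (\<lambda>\<rho>. if fst \<rho> = i then 1 else 0))"

text \<open>L_ext = ker A_ext, as integer vectors indexed by J (zero outside J).\<close>
definition Lext :: "nat \<Rightarrow> (nat \<Rightarrow> nat) \<Rightarrow> (nat \<Rightarrow> nat \<Rightarrow> int^'n) \<Rightarrow> (nat \<times> nat \<Rightarrow> int) set" where
  "Lext r nn v = {l. (\<forall>x. x \<notin> Jset r nn \<longrightarrow> l x = 0) \<and>
      (\<Sum>\<rho>\<in>rays r nn. real_of_int (l \<rho>) *\<^sub>R rv v \<rho>) = 0 \<and>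
      (\<forall>i<r. (\<Sum>j\<le>nn i. l (i,j)) = 0)}"

text \<open>tau^dual intersected with L_ext, for tau the closed Kaehler (= nef) cone, where a class
  [sum a_rho D_rho] pairs with l in L_ext as sum over rays of l_rho * a_rho.\<close>
definition nef_dual_Lext ::
  "nat \<Rightarrow> (nat \<Rightarrow> nat) \<Rightarrow> (nat \<Rightarrow> nat \<Rightarrow> int^'n) \<Rightarrow> (nat \<times> nat) set set \<Rightarrow> (nat \<times> nat \<Rightarrow> int) set" where
  "nef_dual_Lext r nn v S = {l \<in> Lext r nn v. \<forall>a. nef_div r nn v S a \<longrightarrow>
      0 \<le> (\<Sum>\<rho>\<in>rays r nn. real_of_int (l \<rho>) * a \<rho>)}"

type_synonym mpoly = "((nat \<times> nat) \<Rightarrow>\<^sub>0 nat) \<Rightarrow>\<^sub>0 complex"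

definition Var :: "nat \<times> nat \<Rightarrow> mpoly" where
  "Var x = Poly_Mapping.single (Poly_Mapping.single x 1) 1"

definition Const :: "complex \<Rightarrow> mpoly" where
  "Const c = Poly_Mapping.single 0 c"

definition eval :: "mpoly \<Rightarrow> (nat \<times> nat \<Rightarrow> complex) \<Rightarrow> complex" where
  "eval p a = (\<Sum>mo\<in>Poly_Mapping.keys p. Poly_Mapping.lookup p mo * (\<Prod>x\<in>Poly_Mapping.keys mo. a x ^ Poly_Mapping.lookup mo x))"

definition ideal_gen :: "mpoly set \<Rightarrow> mpoly set" where
  "ideal_gen G = {p. \<exists>F c. finite F \<and> F \<subseteq> G \<and> p = (\<Sum>g\<in>F. c g * g)}"

definition zero_locus :: "(nat \<times> nat) set \<Rightarrow> mpoly set \<Rightarrow> (nat \<times> nat \<Rightarrow> complex) set" where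
  "zero_locus J I = {a. (\<forall>x. x \<notin> J \<longrightarrow> a x = 0) \<and> (\<forall>p\<in>I. eval p a = 0)}"

definition I_ell :: "(nat \<times> nat) set \<Rightarrow> (nat \<times> nat \<Rightarrow> int) \<Rightarrow> mpoly" where
  "I_ell J l = (\<Prod>x\<in>J. \<Prod>k<nat (l x). (Var x - Const (of_nat k)))"

definition pair_nu :: "(nat \<Rightarrow> nat \<Rightarrow> int^'n) \<Rightarrow> int^'n \<Rightarrow> (nat \<Rightarrow> int) \<Rightarrow> nat \<times> nat \<Rightarrow> int" where
  "pair_nu v m c x = (if snd x = 0 then 0 else idot m (v (fst x) (snd x))) + c (fst x)"

text \<open>Linear generators (b): beta = (betaN, betar) in C^n x C^r.\<close>
definition lin_gens ::
  "nat \<Rightarrow> (nat \<Rightarrow> nat) \<Rightarrow> (nat \<Rightarrow> nat \<Rightarrow> int^'n) \<Rightarrow> complex^'n \<Rightarrow> (nat \<Rightarrow> complex) \<Rightarrow> mpoly set" where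
  "lin_gens r nn v betaN betar =
     {(\<Sum>x\<in>Jset r nn. Const (of_int (pair_nu v m c x)) * Var x)
        - Const ((\<Sum>k\<in>UNIV. of_int (m $ k) * betaN $ k) + (\<Sum>i<r. of_int (c i) * betar i))
      | m c. True}"

definition Ind_nef ::
  "nat \<Rightarrow> (nat \<Rightarrow> nat) \<Rightarrow> (nat \<Rightarrow> nat \<Rightarrow> int^'n) \<Rightarrow> (nat \<times> nat) set set
     \<Rightarrow> complex^'n \<Rightarrow> (nat \<Rightarrow> complex) \<Rightarrow> mpoly set" where
  "Ind_nef r nn v S betaN betar = ideal_gen
     ({I_ell (Jset r nn) l | l. l \<in> nef_dual_Lext r nn v S \<and> l \<noteq> (\<lambda>_. 0)}
      \<union> lin_gens r nn v betaN betar)"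

definition primitive_collection ::
  "nat \<Rightarrow> (nat \<Rightarrow> nat) \<Rightarrow> (nat \<times> nat) set set \<Rightarrow> (nat \<times> nat) set \<Rightarrow> bool" where
  "primitive_collection r nn S P \<longleftrightarrow> P \<subseteq> rays r nn \<and> P \<notin> S \<and> (\<forall>Q. Q \<subset> P \<longrightarrow> Q \<in> S)"

text \<open>l is the primitive relation of P (as element of L): sum_P v - sum_sigma c v = 0 where
  sigma is the cone containing sum_P v in its relative interior and c > 0.\<close>
definition primitive_relation ::
  "(nat \<Rightarrow> nat \<Rightarrow> int^'n) \<Rightarrow> (nat \<times> nat) set set \<Rightarrow> (nat \<times> nat) set \<Rightarrow> (nat \<times> nat \<Rightarrow> int) \<Rightarrow> bool" where
  "primitive_relation v S P l \<longleftrightarrow> (\<exists>\<sigma>\<in>S. \<exists>c :: nat \<times> nat \<Rightarrow> int.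
      (\<forall>\<rho>\<in>\<sigma>. 0 < c \<rho>) \<and>
      (\<Sum>\<rho>\<in>P. rv v \<rho>) = (\<Sum>\<rho>\<in>\<sigma>. real_of_int (c \<rho>) *\<^sub>R rv v \<rho>) \<and>
      l = (\<lambda>\<rho>. (if \<rho> \<in> P then 1 else 0) - (if \<rho> \<in> \<sigma> then c \<rho> else 0)))"

text \<open>Image in L_ext of l in L (add the (i,0)-coordinates).\<close>
definition ext_L :: "nat \<Rightarrow> (nat \<Rightarrow> nat) \<Rightarrow> (nat \<times> nat \<Rightarrow> int) \<Rightarrow> (nat \<times> nat \<Rightarrow> int)" where
  "ext_L r nn l x = (if x \<in> rays r nn then l x
      else if x \<in> Jset r nn then - (\<Sum>j\<in>{1..nn (fst x)}. l (fst x, j)) else 0)"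

definition I_prime ::
  "nat \<Rightarrow> (nat \<Rightarrow> nat) \<Rightarrow> (nat \<Rightarrow> nat \<Rightarrow> int^'n) \<Rightarrow> (nat \<times> nat) set set
     \<Rightarrow> complex^'n \<Rightarrow> (nat \<Rightarrow> complex) \<Rightarrow> mpoly set" where
  "I_prime r nn v S betaN betar = ideal_gen
     ({I_ell (Jset r nn) (ext_L r nn l) | P l.
         primitive_collection r nn S P \<and> primitive_relation v S P l}
      \<union> lin_gens r nn v betaN betar)"

end

theory Submission
  imports Defs
begin

text \<open>
  The inclusion holds because the lift of a primitive relation pairs nonnegatively with every
  nef class: this is convexity of the support function of a nef divisor at the point
  \<open>\<Sum>\<^sub>P \<rho> = \<Sum>\<^sub>\<sigma> c\<^sub>\<rho> \<rho>\<close>.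
  For the zero loci, let \<open>\<alpha>\<close> be a zero of \<open>\<I>'\<close>. The only positive entries of \<open>\<ell>\<^sub>e\<^sub>x\<^sub>t(\<P>)\<close> are
  ones on \<open>\<P> - \<sigma>\<close> (the \<open>(i,0)\<close>-entries are \<open>\<le> 0\<close> because the \<open>E\<^sub>i\<close> are nef), so \<open>\<alpha>\<close> vanishes
  somewhere on each primitive collection and the rays where \<open>\<alpha> \<noteq> 0\<close> span a cone \<open>\<tau>\<close> of the fan.
  If \<open>I\<^sub>\<ell>(\<alpha>) \<noteq> 0\<close> for some \<open>0 \<noteq> \<ell> \<in> \<tau>\<^sup>\<or>\<close>, then \<open>\<ell> \<le> 0\<close> off \<open>\<tau>\<close>; pairing \<open>\<ell>\<close> with an ample class,
  whose support function is strictly convex, forces \<open>\<ell>\<close> to vanish off a maximal cone containing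
  \<open>\<tau>\<close>, and unimodularity of that cone then gives \<open>\<ell> = 0\<close>.
\<close>

section \<open>Evaluation of polynomials\<close>

definition eval_monomial :: "((nat \<times> nat) \<Rightarrow>\<^sub>0 nat) \<Rightarrow> (nat \<times> nat \<Rightarrow> complex) \<Rightarrow> complex" where
  "eval_monomial mo a = (\<Prod>x\<in>Poly_Mapping.keys mo. a x ^ Poly_Mapping.lookup mo x)"

lemma eval_monomial_superset:
  assumes "finite A" "Poly_Mapping.keys mo \<subseteq> A"
  shows "eval_monomial mo a = (\<Prod>x\<in>A. a x ^ Poly_Mapping.lookup mo x)"
  unfolding eval_monomial_def
  by (rule prod.mono_neutral_left) (use assms in \<open>auto simp: in_keys_iff\<close>)

lemma eval_monomial_add: "eval_monomial (m1 + m2) a = eval_monomial m1 a * eval_monomial m2 a"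
proof -
  let ?A = "Poly_Mapping.keys m1 \<union> Poly_Mapping.keys m2"
  have "eval_monomial (m1 + m2) a = (\<Prod>x\<in>?A. a x ^ Poly_Mapping.lookup (m1 + m2) x)"
    by (rule eval_monomial_superset) (simp_all add: keys_add)
  also have "\<dots> = (\<Prod>x\<in>?A. a x ^ Poly_Mapping.lookup m1 x) * (\<Prod>x\<in>?A. a x ^ Poly_Mapping.lookup m2 x)"
    by (simp only: lookup_add power_add prod.distrib)
  also have "\<dots> = eval_monomial m1 a * eval_monomial m2 a"
    using eval_monomial_superset[of ?A m1 a] eval_monomial_superset[of ?A m2 a] by simp
  finally show ?thesis .
qed

lemma eval_eq_sum_monomials:
  "eval p a = (\<Sum>mo\<in>Poly_Mapping.keys p. Poly_Mapping.lookup p mo * eval_monomial mo a)"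
  by (simp add: eval_def eval_monomial_def)

lemma eval_superset:
  assumes "finite A" "Poly_Mapping.keys p \<subseteq> A"
  shows "eval p a = (\<Sum>mo\<in>A. Poly_Mapping.lookup p mo * eval_monomial mo a)"
  unfolding eval_eq_sum_monomials
  by (rule sum.mono_neutral_left) (use assms in \<open>auto simp: in_keys_iff\<close>)

lemma eval_add: "eval (p + q) a = eval p a + eval q a"
proof -
  let ?A = "Poly_Mapping.keys p \<union> Poly_Mapping.keys q"
  have "eval (p + q) a = (\<Sum>mo\<in>?A. Poly_Mapping.lookup (p + q) mo * eval_monomial mo a)"
    by (rule eval_superset) (simp_all add: keys_add)
  also have "\<dots> = (\<Sum>mo\<in>?A. Poly_Mapping.lookup p mo * eval_monomial mo a)
                 + (\<Sum>mo\<in>?A. Poly_Mapping.lookup q mo * eval_monomial mo a)"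
    by (simp only: lookup_add distrib_right sum.distrib)
  also have "\<dots> = eval p a + eval q a"
    using eval_superset[of ?A p a] eval_superset[of ?A q a] by simp
  finally show ?thesis .
qed

lemma eval_uminus: "eval (- p) a = - eval p a"
  by (simp add: eval_eq_sum_monomials sum_negf)

lemma eval_diff: "eval (p - q) a = eval p a - eval q a"
  using eval_add[of p "- q" a] eval_uminus[of q a] by simp

lemma eval_zero [simp]: "eval 0 a = 0"
  by (simp add: eval_def)

lemma eval_sum: "eval (\<Sum>i\<in>I. f i) a = (\<Sum>i\<in>I. eval (f i) a)"
  by (induction I rule: infinite_finite_induct) (auto simp: eval_add)

lemma eval_single: "eval (Poly_Mapping.single m c) a = c * eval_monomial m a"
  by (simp add: eval_eq_sum_monomials)

lemma poly_mapping_sum_single: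
  "p = (\<Sum>mo\<in>Poly_Mapping.keys p. Poly_Mapping.single mo (Poly_Mapping.lookup p mo))"
proof (rule poly_mapping_eqI)
  fix k
  have "Poly_Mapping.lookup (\<Sum>mo\<in>Poly_Mapping.keys p. Poly_Mapping.single mo (Poly_Mapping.lookup p mo)) k
     = (\<Sum>mo\<in>Poly_Mapping.keys p. if mo = k then Poly_Mapping.lookup p mo else 0)"
    by (simp only: lookup_sum lookup_single when_def)
  also have "\<dots> = Poly_Mapping.lookup p k"
    by (simp add: in_keys_iff)
  finally show "Poly_Mapping.lookup p k
      = Poly_Mapping.lookup (\<Sum>mo\<in>Poly_Mapping.keys p. Poly_Mapping.single mo (Poly_Mapping.lookup p mo)) k"
    by simp
qed

lemma eval_mult: "eval (p * q) a = eval p a * eval q a"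
proof -
  have "p * q = (\<Sum>m\<in>Poly_Mapping.keys p. \<Sum>m'\<in>Poly_Mapping.keys q.
      Poly_Mapping.single m (Poly_Mapping.lookup p m) * Poly_Mapping.single m' (Poly_Mapping.lookup q m'))"
    by (subst (1 2) poly_mapping_sum_single) (rule sum_product)
  then have pq: "p * q = (\<Sum>m\<in>Poly_Mapping.keys p. \<Sum>m'\<in>Poly_Mapping.keys q.
      Poly_Mapping.single (m + m') (Poly_Mapping.lookup p m * Poly_Mapping.lookup q m'))"
    by (simp only: mult_single)
  have "eval (p * q) a = (\<Sum>m\<in>Poly_Mapping.keys p. \<Sum>m'\<in>Poly_Mapping.keys q.
      (Poly_Mapping.lookup p m * eval_monomial m a) * (Poly_Mapping.lookup q m' * eval_monomial m' a))"
    unfolding pq by (simp only: eval_sum eval_single eval_monomial_add mult_ac)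
  also have "\<dots> = eval p a * eval q a"
    by (simp only: eval_eq_sum_monomials sum_product)
  finally show ?thesis .
qed

lemma eval_one [simp]: "eval 1 a = 1"
  using eval_single[of 0 1 a] by (simp add: eval_monomial_def)

lemma eval_prod: "eval (\<Prod>i\<in>I. f i) a = (\<Prod>i\<in>I. eval (f i) a)"
  by (induction I rule: infinite_finite_induct) (auto simp: eval_mult)

lemma eval_Var [simp]: "eval (Var x) a = a x"
  by (simp add: Var_def eval_single eval_monomial_def)

lemma eval_Const [simp]: "eval (Const c) a = c"
  by (simp add: Const_def eval_single eval_monomial_def)

lemma eval_I_ell_eq_0_iff:
  assumes "finite J"
  shows "eval (I_ell J l) a = 0 \<longleftrightarrow> (\<exists>x\<in>J. \<exists>k<nat (l x). a x = of_nat k)"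
  using assms by (auto simp: I_ell_def eval_prod eval_diff prod_zero_iff)

lemma ideal_gen_superset: "G \<subseteq> ideal_gen G"
proof
  fix g assume "g \<in> G"
  then show "g \<in> ideal_gen G"
    unfolding ideal_gen_def by (intro CollectI exI[of _ "{g}"] exI[of _ "\<lambda>_. 1"]) simp
qed

lemma ideal_gen_mono: "G \<subseteq> H \<Longrightarrow> ideal_gen G \<subseteq> ideal_gen H"
  unfolding ideal_gen_def by blast

lemma zero_locus_ideal_gen: "zero_locus J (ideal_gen G) = zero_locus J G"
proof
  show "zero_locus J (ideal_gen G) \<subseteq> zero_locus J G"
    using ideal_gen_superset unfolding zero_locus_def by blast
next
  show "zero_locus J G \<subseteq> zero_locus J (ideal_gen G)"
  proof
    fix a assume a: "a \<in> zero_locus J G"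
    have "eval p a = 0" if "p \<in> ideal_gen G" for p
    proof -
      obtain F c where "F \<subseteq> G" and p: "p = (\<Sum>g\<in>F. c g * g)"
        using \<open>p \<in> ideal_gen G\<close> unfolding ideal_gen_def by blast
      then have "\<forall>g\<in>F. eval g a = 0" using a unfolding zero_locus_def by blast
      then show ?thesis unfolding p by (simp add: eval_sum eval_mult)
    qed
    then show "a \<in> zero_locus J (ideal_gen G)" using a unfolding zero_locus_def by blast
  qed
qed

section \<open>Unimodular cones\<close>

lemma det_in_Ints:
  fixes A :: "real^'n^'n"
  assumes "\<forall>i j. A$i$j \<in> \<int>"
  shows "det A \<in> \<int>"
  unfolding det_def using assms by (intro Ints_sum Ints_mult Ints_prod) auto

lemma det_of_int:
  fixes B :: "int^'n^'n"
  shows "det (\<chi> i j. real_of_int (B$i$j)) = real_of_int (det B)"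
  unfolding det_def by (simp add: of_int_sum of_int_prod)

lemma unimodular_cone_Cramer:
  fixes v :: "nat \<Rightarrow> nat \<Rightarrow> int^'n"
  assumes u: "unimodular_cone v \<sigma>" and eq: "(\<Sum>\<rho>\<in>\<sigma>. f \<rho> *\<^sub>R rv v \<rho>) = w"
  obtains A :: "real^'n^'n" where "\<forall>i j. A$i$j \<in> \<int>" and "\<bar>det A\<bar> = 1"
    and "\<forall>\<rho>\<in>\<sigma>. \<exists>k. f \<rho> * det A = det (\<chi> i j. if j = k then w$i else A$i$j)"
proof -
  from u obtain B :: "int^'n^'n" where dB: "\<bar>det B\<bar> = 1"
    and hB: "\<forall>\<rho>\<in>\<sigma>. \<exists>k. B $ k = v (fst \<rho>) (snd \<rho>)"
    and inj: "inj_on (\<lambda>\<rho>. v (fst \<rho>) (snd \<rho>)) \<sigma>"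
    unfolding unimodular_cone_def by blast
  define kk where "kk \<rho> = (SOME k. B $ k = v (fst \<rho>) (snd \<rho>))" for \<rho>
  have kk: "B $ (kk \<rho>) = v (fst \<rho>) (snd \<rho>)" if "\<rho> \<in> \<sigma>" for \<rho>
    unfolding kk_def using hB that by (metis (mono_tags, lifting) someI_ex)
  have injk: "inj_on kk \<sigma>"
  proof (rule inj_onI)
    fix x y assume "x \<in> \<sigma>" "y \<in> \<sigma>" "kk x = kk y"
    then have "v (fst x) (snd x) = v (fst y) (snd y)" using kk by metis
    then show "x = y" using inj \<open>x \<in> \<sigma>\<close> \<open>y \<in> \<sigma>\<close> by (meson inj_onD)
  qed
  define A :: "real^'n^'n" where "A = (\<chi> i j. real_of_int (B$j$i))"
  define d :: "real^'n" where "d = (\<chi> k. if k \<in> kk`\<sigma> then f (inv_into \<sigma> kk k) else 0)"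
  have "A = transpose (\<chi> i j. real_of_int (B$i$j))"
    by (simp add: A_def transpose_def)
  then have detA: "det A = real_of_int (det B)"
    by (simp add: det_of_int)
  have "(A *v d) $ i = w $ i" for i
  proof -
    have "(A *v d) $ i = (\<Sum>j\<in>UNIV. A$i$j * d$j)"
      by (simp add: matrix_vector_mult_def)
    also have "\<dots> = (\<Sum>j\<in>kk`\<sigma>. real_of_int (B$j$i) * f (inv_into \<sigma> kk j))"
      by (rule sum.mono_neutral_cong_right) (auto simp: A_def d_def)
    also have "\<dots> = (\<Sum>\<rho>\<in>\<sigma>. real_of_int (B$(kk \<rho>)$i) * f \<rho>)"
      by (subst sum.reindex[OF injk]) (auto simp: inv_into_f_f[OF injk])
    also have "\<dots> = (\<Sum>\<rho>\<in>\<sigma>. f \<rho> * rv v \<rho> $ i)"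
      by (rule sum.cong) (auto simp: kk rv_def)
    also have "\<dots> = w $ i"
      using eq[symmetric] by simp
    finally show ?thesis .
  qed
  then have Av: "A *v d = w"
    by (simp add: vec_eq_iff)
  have "f \<rho> * det A = det (\<chi> i j. if j = kk \<rho> then w$i else A$i$j)" if "\<rho> \<in> \<sigma>" for \<rho>
    using cramer_lemma[of "kk \<rho>" A d] that unfolding Av by (simp add: d_def inv_into_f_f[OF injk])
  moreover have "\<bar>det A\<bar> = 1"
    using dB detA by (metis of_int_1 of_int_abs)
  moreover have "\<forall>i j. A$i$j \<in> \<int>"
    by (simp add: A_def)
  ultimately show ?thesis
    using that by blast
qed

lemma unimodular_cone_coeff_Ints:
  fixes v :: "nat \<Rightarrow> nat \<Rightarrow> int^'n"
  assumes "unimodular_cone v \<sigma>"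
    and "(\<Sum>\<rho>\<in>\<sigma>. f \<rho> *\<^sub>R rv v \<rho>) = w" and w: "\<forall>i. w$i \<in> \<int>" and "\<rho> \<in> \<sigma>"
  shows "f \<rho> \<in> \<int>"
proof -
  obtain A :: "real^'n^'n" where Ai: "\<forall>i j. A$i$j \<in> \<int>" and dA: "\<bar>det A\<bar> = 1"
    and h: "\<forall>\<rho>\<in>\<sigma>. \<exists>k. f \<rho> * det A = det (\<chi> i j. if j = k then w$i else A$i$j)"
    by (rule unimodular_cone_Cramer[OF assms(1,2)])
  obtain k where k: "f \<rho> * det A = det (\<chi> i j. if j = k then w$i else A$i$j)"
    using h \<open>\<rho> \<in> \<sigma>\<close> by blast
  have "f \<rho> * det A \<in> \<int>"
    unfolding k by (rule det_in_Ints) (simp add: Ai w)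
  moreover have "det A = 1 \<or> det A = -1"
    using dA by linarith
  ultimately show ?thesis
    by (auto simp: minus_in_Ints_iff)
qed

lemma unimodular_cone_coeff_eq_0:
  fixes v :: "nat \<Rightarrow> nat \<Rightarrow> int^'n"
  assumes "unimodular_cone v \<sigma>"
    and "(\<Sum>\<rho>\<in>\<sigma>. f \<rho> *\<^sub>R rv v \<rho>) = 0" and "\<rho> \<in> \<sigma>"
  shows "f \<rho> = 0"
proof -
  obtain A :: "real^'n^'n" where dA: "\<bar>det A\<bar> = 1"
    and h: "\<forall>\<rho>\<in>\<sigma>. \<exists>k. f \<rho> * det A = det (\<chi> i j. if j = k then (0::real^'n)$i else A$i$j)"
    by (rule unimodular_cone_Cramer[OF assms(1,2)])
  obtain k where k: "f \<rho> * det A = det (\<chi> i j. if j = k then (0::real^'n)$i else A$i$j)"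
    using h \<open>\<rho> \<in> \<sigma>\<close> by blast
  have "column k (\<chi> i j. if j = k then (0::real^'n)$i else A$i$j) = 0"
    by (simp add: column_def vec_eq_iff)
  then have "det (\<chi> i j. if j = k then (0::real^'n)$i else A$i$j) = 0"
    by (rule det_zero_column)
  then show ?thesis
    using k dA by auto
qed

section \<open>Fans, nef divisors and the lattice \<open>L\<^sub>e\<^sub>x\<^sub>t\<close>\<close>

lemma finite_rays [simp]: "finite (rays r nn)"
proof -
  have "rays r nn = (SIGMA i:{..<r}. {1..nn i})"
    by (auto simp: rays_def)
  then show ?thesis by simp
qed

lemma finite_Jset [simp]: "finite (Jset r nn)"
proof -
  have "Jset r nn = (SIGMA i:{..<r}. {..nn i})"
    by (auto simp: Jset_def)
  then show ?thesis by simp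
qed

lemma rays_subset_Jset: "rays r nn \<subseteq> Jset r nn"
  by (auto simp: rays_def Jset_def)

lemma Jset_minus_rays: "x \<in> Jset r nn \<Longrightarrow> x \<notin> rays r nn \<Longrightarrow> \<exists>i<r. x = (i, 0)"
  by (cases x) (auto simp: rays_def Jset_def)

lemma sum_atMost_split_zero: "(\<Sum>j\<le>n. g j) = g 0 + (\<Sum>j\<in>{1..n}. g (j::nat))"
proof -
  have "{..n} = insert 0 {1..n}" by auto
  then show ?thesis by simp
qed

lemma smooth_complete_fan_subset_rays:
  "smooth_complete_fan r nn v S \<Longrightarrow> \<sigma> \<in> S \<Longrightarrow> \<sigma> \<subseteq> rays r nn"
  by (auto simp: smooth_complete_fan_def)

lemma smooth_complete_fan_subset_closed:
  "smooth_complete_fan r nn v S \<Longrightarrow> \<sigma> \<in> S \<Longrightarrow> \<tau> \<subseteq> \<sigma> \<Longrightarrow> \<tau> \<in> S"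
  by (auto simp: smooth_complete_fan_def)

lemma smooth_complete_fan_unimodular:
  "smooth_complete_fan r nn v S \<Longrightarrow> \<sigma> \<in> S \<Longrightarrow> unimodular_cone v \<sigma>"
  by (auto simp: smooth_complete_fan_def)

lemma smooth_complete_fan_max_cone:
  assumes f: "smooth_complete_fan r nn v S" and "\<sigma> \<in> S"
  obtains \<sigma>m where "max_cone S \<sigma>m" and "\<sigma> \<subseteq> \<sigma>m"
proof -
  have "S \<subseteq> Pow (rays r nn)"
    using smooth_complete_fan_subset_rays[OF f] by blast
  then have "finite S"
    by (rule finite_subset) simp
  then show ?thesis
    using finite_has_maximal2[OF _ \<open>\<sigma> \<in> S\<close>] that unfolding max_cone_def by blast
qed

lemma Lext_zero_index:
  assumes "L \<in> Lext r nn v" and "i < r"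
  shows "L (i, 0) = - (\<Sum>j\<in>{1..nn i}. L (i, j))"
proof -
  have "(\<Sum>j\<le>nn i. L (i, j)) = 0"
    using assms unfolding Lext_def by blast
  then show ?thesis
    by (simp add: sum_atMost_split_zero)
qed

lemma nef_div_convex:
  assumes f: "smooth_complete_fan r nn v S" and nef: "nef_div r nn v S a"
    and s: "\<sigma> \<in> S" and P: "P \<subseteq> rays r nn"
    and eq: "(\<Sum>\<rho>\<in>P. rv v \<rho>) = (\<Sum>\<rho>\<in>\<sigma>. c \<rho> *\<^sub>R rv v \<rho>)"
  shows "(\<Sum>\<rho>\<in>\<sigma>. c \<rho> * a \<rho>) \<le> (\<Sum>\<rho>\<in>P. a \<rho>)"
proof -
  obtain \<sigma>m where "max_cone S \<sigma>m" and sub: "\<sigma> \<subseteq> \<sigma>m"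
    using smooth_complete_fan_max_cone[OF f s] .
  then obtain m :: "real^'a" where h1: "\<forall>\<rho>\<in>\<sigma>m. m \<bullet> rv v \<rho> = - a \<rho>"
    and h2: "\<forall>\<rho>\<in>rays r nn. m \<bullet> rv v \<rho> \<ge> - a \<rho>"
    using nef unfolding nef_div_def by blast
  have "(\<Sum>\<rho>\<in>\<sigma>. c \<rho> * a \<rho>) = (\<Sum>\<rho>\<in>\<sigma>. - (c \<rho> * (m \<bullet> rv v \<rho>)))"
    by (rule sum.cong) (use h1 sub in auto)
  also have "\<dots> = - (m \<bullet> (\<Sum>\<rho>\<in>\<sigma>. c \<rho> *\<^sub>R rv v \<rho>))"
    by (simp add: inner_sum_right sum_negf)
  also have "\<dots> = (\<Sum>\<rho>\<in>P. - (m \<bullet> rv v \<rho>))"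
    by (simp add: eq[symmetric] inner_sum_right sum_negf)
  also have "\<dots> \<le> (\<Sum>\<rho>\<in>P. a \<rho>)"
    by (rule sum_mono) (use h2 P in force)
  finally show ?thesis .
qed

lemma ample_div_imp_nef_div:
  assumes "ample_div r nn v S a"
  shows "nef_div r nn v S a"
  unfolding nef_div_def
proof (intro allI impI)
  fix \<sigma> assume "max_cone S \<sigma>"
  then obtain m :: "real^'a" where h1: "\<forall>\<rho>\<in>\<sigma>. m \<bullet> rv v \<rho> = - a \<rho>"
    and h2: "\<forall>\<rho>\<in>rays r nn - \<sigma>. m \<bullet> rv v \<rho> > - a \<rho>"
    using assms unfolding ample_div_def by blast
  then have "\<forall>\<rho>\<in>rays r nn. m \<bullet> rv v \<rho> \<ge> - a \<rho>"
    by (metis DiffI less_eq_real_def order_refl)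
  then show "\<exists>m::real^'a. (\<forall>\<rho>\<in>\<sigma>. m \<bullet> rv v \<rho> = - a \<rho>) \<and> (\<forall>\<rho>\<in>rays r nn. m \<bullet> rv v \<rho> \<ge> - a \<rho>)"
    using h1 by blast
qed

lemma ext_L_rays [simp]: "x \<in> rays r nn \<Longrightarrow> ext_L r nn l x = l x"
  by (simp add: ext_L_def)

lemma ext_L_in_Lext:
  assumes "(\<Sum>\<rho>\<in>rays r nn. real_of_int (l \<rho>) *\<^sub>R rv v \<rho>) = 0"
  shows "ext_L r nn l \<in> Lext r nn v"
proof -
  let ?L = "ext_L r nn l"
  have "(\<Sum>j\<le>nn i. ?L (i, j)) = 0" if "i < r" for i
  proof -
    have "(\<Sum>j\<in>{1..nn i}. ?L (i, j)) = (\<Sum>j\<in>{1..nn i}. l (i, j))"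
      using that by (intro sum.cong) (auto simp: rays_def)
    moreover have "?L (i, 0) = - (\<Sum>j\<in>{1..nn i}. l (i, j))"
      using that by (simp add: ext_L_def rays_def Jset_def)
    ultimately show ?thesis
      by (simp add: sum_atMost_split_zero)
  qed
  moreover have "(\<Sum>\<rho>\<in>rays r nn. real_of_int (?L \<rho>) *\<^sub>R rv v \<rho>) = 0"
    using assms by simp
  moreover have "\<forall>x. x \<notin> Jset r nn \<longrightarrow> ?L x = 0"
    using rays_subset_Jset by (auto simp: ext_L_def)
  ultimately show ?thesis
    unfolding Lext_def by blast
qed

section \<open>Primitive relations\<close>

lemma primitive_relation_sum:
  fixes g :: "nat \<times> nat \<Rightarrow> 'b::real_vector"
  assumes P: "P \<subseteq> rays r nn" and \<sigma>: "\<sigma> \<subseteq> rays r nn"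
    and l: "l = (\<lambda>\<rho>. (if \<rho> \<in> P then 1 else 0) - (if \<rho> \<in> \<sigma> then c \<rho> else 0))"
  shows "(\<Sum>\<rho>\<in>rays r nn. real_of_int (l \<rho>) *\<^sub>R g \<rho>)
           = (\<Sum>\<rho>\<in>P. g \<rho>) - (\<Sum>\<rho>\<in>\<sigma>. real_of_int (c \<rho>) *\<^sub>R g \<rho>)"
proof -
  have "(\<Sum>\<rho>\<in>rays r nn. real_of_int (l \<rho>) *\<^sub>R g \<rho>)
      = (\<Sum>\<rho>\<in>rays r nn. if \<rho> \<in> P then g \<rho> else 0)
        - (\<Sum>\<rho>\<in>rays r nn. if \<rho> \<in> \<sigma> then real_of_int (c \<rho>) *\<^sub>R g \<rho> else 0)"
    unfolding sum_subtractf[symmetric] l by (rule sum.cong) (auto simp: scaleR_left_diff_distrib)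
  also have "\<dots> = (\<Sum>\<rho>\<in>P. g \<rho>) - (\<Sum>\<rho>\<in>\<sigma>. real_of_int (c \<rho>) *\<^sub>R g \<rho>)"
    using P \<sigma> by (simp add: sum.inter_restrict[symmetric] Int_absorb1)
  finally show ?thesis .
qed

lemma primitive_relation_in_nef_dual:
  assumes f: "smooth_complete_fan r nn v S"
    and P: "primitive_collection r nn S P" and l: "primitive_relation v S P l"
  shows "ext_L r nn l \<in> nef_dual_Lext r nn v S" and "ext_L r nn l \<noteq> (\<lambda>_. 0)"
proof -
  obtain \<sigma> c where s: "\<sigma> \<in> S"
    and eq: "(\<Sum>\<rho>\<in>P. rv v \<rho>) = (\<Sum>\<rho>\<in>\<sigma>. real_of_int (c \<rho>) *\<^sub>R rv v \<rho>)"
    and ld: "l = (\<lambda>\<rho>. (if \<rho> \<in> P then 1 else 0) - (if \<rho> \<in> \<sigma> then c \<rho> else 0))"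
    using l unfolding primitive_relation_def by blast
  have \<sigma>R: "\<sigma> \<subseteq> rays r nn"
    using smooth_complete_fan_subset_rays[OF f s] .
  have PR: "P \<subseteq> rays r nn" and PS: "P \<notin> S"
    using P by (auto simp: primitive_collection_def)
  note pairing = primitive_relation_sum[OF PR \<sigma>R ld]
  have "ext_L r nn l \<in> Lext r nn v"
    by (rule ext_L_in_Lext) (simp add: pairing eq)
  moreover have "0 \<le> (\<Sum>\<rho>\<in>rays r nn. real_of_int (ext_L r nn l \<rho>) * a \<rho>)"
    if "nef_div r nn v S a" for a
    using pairing[where g = a] nef_div_convex[OF f that s PR eq] by simp
  ultimately show "ext_L r nn l \<in> nef_dual_Lext r nn v S"
    unfolding nef_dual_Lext_def by blast
  from PS obtain \<rho> where "\<rho> \<in> P" "\<rho> \<notin> \<sigma>"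
    using smooth_complete_fan_subset_closed[OF f s] by blast
  with PR have "ext_L r nn l \<rho> = 1"
    by (auto simp: ld)
  then show "ext_L r nn l \<noteq> (\<lambda>_. 0)"
    by (metis zero_neq_one)
qed

text \<open>The ray generators of a cone of a smooth fan form part of a lattice basis, so the
  coefficients of the lattice point \<open>\<Sum>\<^sub>P \<rho>\<close> in the cone containing it are integers.\<close>
lemma primitive_relation_exists:
  assumes f: "smooth_complete_fan r nn v S" and P: "primitive_collection r nn S P"
  obtains l where "primitive_relation v S P l"
proof -
  let ?w = "\<Sum>\<rho>\<in>P. rv v \<rho>"
  have "?w \<in> (\<Union>\<sigma>\<in>S. coneS v \<sigma>)"
    using f by (simp add: smooth_complete_fan_def)
  then obtain \<sigma>0 c where s0: "\<sigma>0 \<in> S" and cnn: "\<forall>\<rho>\<in>\<sigma>0. 0 \<le> c \<rho>"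
    and weq0: "?w = (\<Sum>\<rho>\<in>\<sigma>0. c \<rho> *\<^sub>R rv v \<rho>)"
    unfolding coneS_def by blast
  define \<sigma> where "\<sigma> = {\<rho>\<in>\<sigma>0. c \<rho> \<noteq> 0}"
  have s: "\<sigma> \<in> S"
    by (rule smooth_complete_fan_subset_closed[OF f s0]) (auto simp: \<sigma>_def)
  have "finite \<sigma>0"
    using smooth_complete_fan_subset_rays[OF f s0] finite_rays by (rule finite_subset)
  then have weq: "(\<Sum>\<rho>\<in>\<sigma>. c \<rho> *\<^sub>R rv v \<rho>) = ?w"
    unfolding weq0 \<sigma>_def by (rule sum.mono_neutral_left) auto
  define ci where "ci \<rho> = \<lfloor>c \<rho>\<rfloor>" for \<rho>
  have ci: "real_of_int (ci \<rho>) = c \<rho>" if "\<rho> \<in> \<sigma>" for \<rho>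
  proof -
    have "c \<rho> \<in> \<int>"
      using smooth_complete_fan_unimodular[OF f s] weq _ that
      by (rule unimodular_cone_coeff_Ints) (simp add: rv_def Ints_sum)
    then show ?thesis
      unfolding ci_def by (metis Ints_cases floor_of_int)
  qed
  have "0 < ci \<rho>" if "\<rho> \<in> \<sigma>" for \<rho>
    using cnn ci[OF that] that by (force simp: \<sigma>_def)
  moreover have "?w = (\<Sum>\<rho>\<in>\<sigma>. real_of_int (ci \<rho>) *\<^sub>R rv v \<rho>)"
    using weq ci by (metis (no_types, lifting) sum.cong)
  ultimately have "primitive_relation v S P
      (\<lambda>\<rho>. (if \<rho> \<in> P then 1 else 0) - (if \<rho> \<in> \<sigma> then ci \<rho> else 0))"
    unfolding primitive_relation_def using s by blast
  then show ?thesis ..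
qed

lemma nef_dual_Lext_zero_index_nonpos:
  assumes nefp: "nef_partition r nn v S" and L: "L \<in> nef_dual_Lext r nn v S" and i: "i < r"
  shows "L (i, 0) \<le> 0"
proof -
  have "nef_div r nn v S (\<lambda>\<rho>. if fst \<rho> = i then 1 else 0)"
    using nefp i unfolding nef_partition_def by blast
  then have ge: "0 \<le> (\<Sum>\<rho>\<in>rays r nn. real_of_int (L \<rho>) * (if fst \<rho> = i then 1 else 0))"
    using L unfolding nef_dual_Lext_def by blast
  have "(\<Sum>\<rho>\<in>rays r nn. real_of_int (L \<rho>) * (if fst \<rho> = i then 1 else 0))
      = (\<Sum>\<rho>\<in>rays r nn \<inter> Pair i ` {1..nn i}. real_of_int (L \<rho>))"
    by (simp add: sum.inter_restrict) (rule sum.cong; auto simp: rays_def)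
  also have "\<dots> = (\<Sum>j\<in>{1..nn i}. real_of_int (L (i, j)))"
    using i by (intro sum.reindex_cong[where l = "Pair i"]) (auto simp: rays_def inj_on_def)
  finally have "0 \<le> (\<Sum>j\<in>{1..nn i}. L (i, j))"
    using ge by (simp only: of_int_sum[symmetric] of_int_0_le_iff)
  then show ?thesis
    using Lext_zero_index[of L r nn v i] L i unfolding nef_dual_Lext_def by simp
qed

section \<open>Zero loci\<close>

lemma zero_locus_I_prime_meets_primitive_collection:
  assumes f: "smooth_complete_fan r nn v S" and nefp: "nef_partition r nn v S"
    and \<alpha>: "\<alpha> \<in> zero_locus (Jset r nn) (I_prime r nn v S betaN betar)"
    and P: "primitive_collection r nn S P"
  shows "\<exists>\<rho>\<in>P. \<alpha> \<rho> = 0"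
proof -
  obtain l where l: "primitive_relation v S P l"
    using primitive_relation_exists[OF f P] .
  let ?L = "ext_L r nn l"
  have "I_ell (Jset r nn) ?L \<in> I_prime r nn v S betaN betar"
    unfolding I_prime_def using P l by (blast intro: subsetD[OF ideal_gen_superset])
  then have "eval (I_ell (Jset r nn) ?L) \<alpha> = 0"
    using \<alpha> by (simp add: zero_locus_def)
  then obtain x k where x: "x \<in> Jset r nn" and k: "k < nat (?L x)" and \<alpha>x: "\<alpha> x = of_nat k"
    using eval_I_ell_eq_0_iff[OF finite_Jset] by blast
  have xR: "x \<in> rays r nn"
  proof (rule ccontr)
    assume "x \<notin> rays r nn"
    then obtain i where "i < r" "x = (i, 0)"
      using Jset_minus_rays[OF x] by blast
    then show False
      using nef_dual_Lext_zero_index_nonpos[OF nefp primitive_relation_in_nef_dual(1)[OF f P l]] k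
      by fastforce
  qed
  obtain \<sigma> c where "\<forall>\<rho>\<in>\<sigma>. 0 < c \<rho>"
    and "l = (\<lambda>\<rho>. (if \<rho> \<in> P then 1 else 0) - (if \<rho> \<in> \<sigma> then c \<rho> else 0))"
    using l unfolding primitive_relation_def by blast
  \<comment> \<open>the only positive entries of \<open>l\<close> are ones, so \<open>k = 0\<close>\<close>
  with k xR have "x \<in> P" and "k = 0"
    by (auto split: if_splits)
  then show ?thesis
    using \<alpha>x by auto
qed

lemma nonzero_support_in_fan:
  assumes "\<forall>P. primitive_collection r nn S P \<longrightarrow> (\<exists>\<rho>\<in>P. \<alpha> \<rho> = 0)"
  shows "{\<rho>\<in>rays r nn. \<alpha> \<rho> \<noteq> 0} \<in> S"
proof (rule ccontr)
  let ?U = "{\<rho>\<in>rays r nn. \<alpha> \<rho> \<noteq> 0}"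
  let ?F = "{Q. Q \<subseteq> ?U \<and> Q \<notin> S}"
  assume "?U \<notin> S"
  then have U: "?U \<in> ?F" by blast
  have "finite ?F"
    by (rule finite_subset[of _ "Pow ?U"]) auto
  then obtain Q where Q: "Q \<in> ?F" and min: "\<forall>Q'\<in>?F. Q' \<le> Q \<longrightarrow> Q = Q'"
    using finite_has_minimal2[OF _ U] by blast
  have "primitive_collection r nn S Q"
    unfolding primitive_collection_def
  proof (intro conjI allI impI)
    fix Q' assume "Q' \<subset> Q"
    then show "Q' \<in> S"
      using Q min by blast
  qed (use Q in blast)+
  then show False
    using assms Q by blast
qed

lemma Lext_eq_zero:
  assumes L: "L \<in> Lext r nn v" and rays: "\<forall>\<rho>\<in>rays r nn. L \<rho> = 0"
  shows "L = (\<lambda>_. 0)"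
proof
  fix x
  show "L x = 0"
  proof (cases "x \<in> Jset r nn - rays r nn")
    case True
    then obtain i where i: "i < r" "x = (i, 0)"
      using Jset_minus_rays by blast
    have "(\<Sum>j\<in>{1..nn i}. L (i, j)) = 0"
      using i rays by (intro sum.neutral) (auto simp: rays_def)
    then show ?thesis
      using Lext_zero_index[OF L i(1)] i(2) by simp
  next
    case False
    then show ?thesis
      using L rays unfolding Lext_def by blast
  qed
qed

text \<open>Strict convexity of the support function of an ample divisor.\<close>
lemma nef_dual_Lext_vanishes_off_max_cone:
  fixes v :: "nat \<Rightarrow> nat \<Rightarrow> int^'n"
  assumes amp: "ample_div r nn v S a" and mc: "max_cone S \<sigma>"
    and L: "L \<in> nef_dual_Lext r nn v S" and nonpos: "\<forall>\<rho>\<in>rays r nn - \<sigma>. L \<rho> \<le> 0"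
  shows "\<forall>\<rho>\<in>rays r nn - \<sigma>. L \<rho> = 0"
proof -
  let ?R = "rays r nn"
  obtain m :: "real^'n" where on: "\<forall>\<rho>\<in>\<sigma>. m \<bullet> rv v \<rho> = - a \<rho>"
    and off: "\<forall>\<rho>\<in>?R - \<sigma>. a \<rho> + m \<bullet> rv v \<rho> > 0"
    using amp mc unfolding ample_div_def by force
  define g where "g \<rho> = real_of_int (L \<rho>) * (a \<rho> + m \<bullet> rv v \<rho>)" for \<rho>
  have "(\<Sum>\<rho>\<in>?R. real_of_int (L \<rho>) * (m \<bullet> rv v \<rho>)) = m \<bullet> (\<Sum>\<rho>\<in>?R. real_of_int (L \<rho>) *\<^sub>R rv v \<rho>)"
    by (simp add: inner_sum_right)
  also have "\<dots> = 0"
    using L unfolding nef_dual_Lext_def Lext_def by simp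
  finally have "sum g ?R = (\<Sum>\<rho>\<in>?R. real_of_int (L \<rho>) * a \<rho>)"
    by (simp add: g_def distrib_left sum.distrib)
  also have "\<dots> \<ge> 0"
    using L ample_div_imp_nef_div[OF amp] unfolding nef_dual_Lext_def by blast
  finally have "0 \<le> sum g ?R" .
  moreover have "\<forall>\<rho>\<in>?R. g \<rho> \<le> 0"
  proof
    fix \<rho> assume "\<rho> \<in> ?R"
    show "g \<rho> \<le> 0"
    proof (cases "\<rho> \<in> \<sigma>")
      case False
      with \<open>\<rho> \<in> ?R\<close> have "\<rho> \<in> ?R - \<sigma>" by blast
      then have "real_of_int (L \<rho>) \<le> 0" and "0 \<le> a \<rho> + m \<bullet> rv v \<rho>"
        using off nonpos by (simp_all add: less_imp_le)
      then show ?thesis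
        unfolding g_def by (rule mult_nonpos_nonneg)
    qed (simp add: g_def on)
  qed
  ultimately have g0: "\<forall>\<rho>\<in>?R. - g \<rho> = 0"
    using sum_nonneg_eq_0_iff[of ?R "\<lambda>\<rho>. - g \<rho>"] sum_nonpos[of ?R g] by (simp add: sum_negf)
  show ?thesis
  proof
    fix \<rho> assume \<rho>: "\<rho> \<in> ?R - \<sigma>"
    then have "g \<rho> = 0"
      using g0 by simp
    with bspec[OF off \<rho>] show "L \<rho> = 0"
      by (simp add: g_def)
  qed
qed

lemma nef_dual_Lext_nonpos_off_cone_eq_zero:
  fixes v :: "nat \<Rightarrow> nat \<Rightarrow> int^'n"
  assumes f: "smooth_complete_fan r nn v S" and proj: "projective_fan r nn v S"
    and L: "L \<in> nef_dual_Lext r nn v S" and \<tau>: "\<tau> \<in> S"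
    and nonpos: "\<forall>\<rho>\<in>rays r nn - \<tau>. L \<rho> \<le> 0"
  shows "L = (\<lambda>_. 0)"
proof -
  let ?R = "rays r nn"
  obtain \<sigma> where mc: "max_cone S \<sigma>" and "\<tau> \<subseteq> \<sigma>"
    using smooth_complete_fan_max_cone[OF f \<tau>] .
  obtain a :: "nat \<times> nat \<Rightarrow> int" where amp: "ample_div r nn v S (\<lambda>\<rho>. real_of_int (a \<rho>))"
    using proj unfolding projective_fan_def by blast
  have \<sigma>: "\<sigma> \<in> S"
    using mc by (simp add: max_cone_def)
  have off: "\<forall>\<rho>\<in>?R - \<sigma>. L \<rho> = 0"
    using nef_dual_Lext_vanishes_off_max_cone[OF amp mc L] nonpos \<open>\<tau> \<subseteq> \<sigma>\<close> by blast
  have "(\<Sum>\<rho>\<in>\<sigma>. real_of_int (L \<rho>) *\<^sub>R rv v \<rho>) = (\<Sum>\<rho>\<in>?R. real_of_int (L \<rho>) *\<^sub>R rv v \<rho>)"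
    using off smooth_complete_fan_subset_rays[OF f \<sigma>] by (intro sum.mono_neutral_left) auto
  also have "\<dots> = 0"
    using L unfolding nef_dual_Lext_def Lext_def by blast
  finally have "\<forall>\<rho>\<in>\<sigma>. L \<rho> = 0"
    using unimodular_cone_coeff_eq_0[OF smooth_complete_fan_unimodular[OF f \<sigma>], of "\<lambda>\<rho>. real_of_int (L \<rho>)"] by simp
  then show ?thesis
    using off L by (intro Lext_eq_zero) (auto simp: nef_dual_Lext_def)
qed

lemma eval_I_ell_nef_dual_eq_0:
  assumes f: "smooth_complete_fan r nn v S" and proj: "projective_fan r nn v S"
    and L: "L \<in> nef_dual_Lext r nn v S" and L0: "L \<noteq> (\<lambda>_. 0)"
    and U: "{\<rho>\<in>rays r nn. \<alpha> \<rho> \<noteq> 0} \<in> S"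
  shows "eval (I_ell (Jset r nn) L) \<alpha> = 0"
proof (rule ccontr)
  assume nz: "eval (I_ell (Jset r nn) L) \<alpha> \<noteq> 0"
  have "L \<rho> \<le> 0" if "\<rho> \<in> rays r nn" and "\<alpha> \<rho> = 0" for \<rho>
  proof (rule ccontr)
    assume "\<not> L \<rho> \<le> 0"
    \<comment> \<open>then \<open>I\<^sub>L\<close> has the factor \<open>\<alpha>\<^sub>\<rho> - 0\<close>\<close>
    then have "\<exists>x\<in>Jset r nn. \<exists>k<nat (L x). \<alpha> x = of_nat k"
      using that rays_subset_Jset by (intro bexI[of _ \<rho>] exI[of _ 0]) auto
    then show False
      using nz eval_I_ell_eq_0_iff[OF finite_Jset] by blast
  qed
  then have "\<forall>\<rho>\<in>rays r nn - {\<rho>\<in>rays r nn. \<alpha> \<rho> \<noteq> 0}. L \<rho> \<le> 0"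
    by blast
  with L0 show False
    using nef_dual_Lext_nonpos_off_cone_eq_zero[OF f proj L U] by blast
qed

theorem mainTheorem7:
  fixes r :: nat and nn :: "nat \<Rightarrow> nat" and v :: "nat \<Rightarrow> nat \<Rightarrow> int^'n"
    and S :: "(nat \<times> nat) set set"
  assumes fan: "smooth_complete_fan r nn v S"
    and proj: "projective_fan r nn v S"
    and nefp: "nef_partition r nn v S"
  shows "I_prime r nn v S 0 (\<lambda>_. - 1/2) \<subseteq> Ind_nef r nn v S 0 (\<lambda>_. - 1/2) \<and>
         zero_locus (Jset r nn) (I_prime r nn v S 0 (\<lambda>_. - 1/2))
           = zero_locus (Jset r nn) (Ind_nef r nn v S 0 (\<lambda>_. - 1/2))"
proof -
  let ?J = "Jset r nn" and ?lin = "lin_gens r nn v 0 (\<lambda>_. - 1/2)"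
  let ?prim = "{I_ell ?J (ext_L r nn l) | P l. primitive_collection r nn S P \<and> primitive_relation v S P l}"
  let ?nef = "{I_ell ?J l | l. l \<in> nef_dual_Lext r nn v S \<and> l \<noteq> (\<lambda>_. 0)}"
  have prim_nef: "?prim \<subseteq> ?nef"
    using primitive_relation_in_nef_dual[OF fan] by fast
  have "zero_locus ?J (?prim \<union> ?lin) \<subseteq> zero_locus ?J (?nef \<union> ?lin)"
  proof
    fix \<alpha> assume \<alpha>: "\<alpha> \<in> zero_locus ?J (?prim \<union> ?lin)"
    then have "\<alpha> \<in> zero_locus ?J (I_prime r nn v S 0 (\<lambda>_. - 1/2))"
      by (simp only: I_prime_def zero_locus_ideal_gen)
    then have "{\<rho>\<in>rays r nn. \<alpha> \<rho> \<noteq> 0} \<in> S"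
      using zero_locus_I_prime_meets_primitive_collection[OF fan nefp] nonzero_support_in_fan by blast
    then have "\<forall>g\<in>?nef. eval g \<alpha> = 0"
      using eval_I_ell_nef_dual_eq_0[OF fan proj] by blast
    with \<alpha> show "\<alpha> \<in> zero_locus ?J (?nef \<union> ?lin)"
      unfolding zero_locus_def by blast
  qed
  moreover have "zero_locus ?J (?nef \<union> ?lin) \<subseteq> zero_locus ?J (?prim \<union> ?lin)"
    using prim_nef unfolding zero_locus_def by blast
  moreover have "ideal_gen (?prim \<union> ?lin) \<subseteq> ideal_gen (?nef \<union> ?lin)"
    using prim_nef by (intro ideal_gen_mono) blast
  ultimately show ?thesis
    unfolding I_prime_def Ind_nef_def zero_locus_ideal_gen by blast
qed

end
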